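(* Let $G$ be a strongly connected digraph with $n\geq 2$ vertices. (1) If $G$ contains an $m$-wheel for some $m\geq 1$, then $G$ admits a boolean nilpotent function of class at most $2n-m+1$. (2) If $G$ has a loop, then $G$ admits a boolean nilpotent function of class at most $2n-1$.
   Context: Digraphs may have loops but no multiple arcs. For $m\geq 1$, the $m$-wheel $W_m$ is the digraph obtained from a directed cycle $C_m$ of length $m$ (for $m=1$, a single vertex with a loop) by adding a new vertex $v$ (the center) and an arc from $v$ to every vertex of $C_m$; $G$ contains an $m$-wheel if some subgraph of $G$ is isomorphic to $W_m$. A boolean function on $[n]$ is a map $f:\{0,1\}^n\to\{0,1\}^n$; its (unsigned) interaction graph has an arc $(j,i)$ iff $f_i$ depends essentially on $x_j$, i.e. $f_i(a)\neq f_i(b)$ for some $a,b$ differing only in coordinate $j$. $G$ admits $f$ if the interaction graph of $f$ equals $G$. $f$ is nilpotent if $f^k$ is constant for some $k\geq 0$ ($f^0=\mathrm{id}$); the least such $k$ is its class. *)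

theory Defs
  imports Main
begin

text \<open>Digraphs on a finite vertex type 'n: a set of arcs (loops allowed, no multiple arcs).\<close>

definition strongly_connected :: "('n \<times> 'n) set \<Rightarrow> bool" where
  "strongly_connected G \<longleftrightarrow> (\<forall>u v. (u, v) \<in> G\<^sup>*)"

text \<open>G contains an m-wheel: a subgraph isomorphic to W_m, i.e. a center v and
m distinct vertices c 0, ..., c (m-1), all different from v, such that
c i -> c ((i+1) mod m) are arcs (a loop when m = 1) and v -> c i are arcs.\<close>
definition contains_wheel :: "('n \<times> 'n) set \<Rightarrow> nat \<Rightarrow> bool" where
  "contains_wheel G m \<longleftrightarrow> m \<ge> 1 \<and>
     (\<exists>v c. inj_on c {0..<m} \<and> v \<notin> c ` {0..<m} \<and>
        (\<forall>i<m. (c i, c (Suc i mod m)) \<in> G \<and> (v, c i) \<in> G))"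

definition depends_on :: "(('n \<Rightarrow> bool) \<Rightarrow> ('n \<Rightarrow> bool)) \<Rightarrow> 'n \<Rightarrow> 'n \<Rightarrow> bool" where
  "depends_on f i j \<longleftrightarrow> (\<exists>x. f x i \<noteq> f (x(j := \<not> x j)) i)"

definition interaction_graph :: "(('n \<Rightarrow> bool) \<Rightarrow> ('n \<Rightarrow> bool)) \<Rightarrow> ('n \<times> 'n) set" where
  "interaction_graph f = {(j, i). depends_on f i j}"

definition admits :: "('n \<times> 'n) set \<Rightarrow> (('n \<Rightarrow> bool) \<Rightarrow> ('n \<Rightarrow> bool)) \<Rightarrow> bool" where
  "admits G f \<longleftrightarrow> interaction_graph f = G"

definition nilpotent_class_le :: "(('n \<Rightarrow> bool) \<Rightarrow> ('n \<Rightarrow> bool)) \<Rightarrow> nat \<Rightarrow> bool" where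
  "nilpotent_class_le f k \<longleftrightarrow> (\<exists>j\<le>k. \<exists>c. \<forall>x. (f ^^ j) x = c)"

end

theory Submission
  imports Defs
begin

text \<open>Give every arc a sign and let \<open>f\<^sub>i\<close> be the conjunction of the corresponding literals of the
  in-neighbours of \<open>i\<close>; whatever the signs, this admits \<open>G\<close>, and we aim at the constant \<open>False\<close>.
  \<open>False\<close> spreads along positive arcs, so once a positive cycle \<open>C\<close> is false for good, every
  vertex positively reachable from \<open>C\<close> is false at most \<open>n - |C|\<close> steps later. It remains to
  choose the negative arcs so that the cycle of the wheel is dead after \<open>n + 1\<close> steps (after
  \<open>n\<close> steps for a loop). If the cycle were still alive, the centre would be true all along;
  through a negative arc this forces a vertex to be false, falsity climbs the chain of
  single in-neighbours above it, and counting that chain together with the cycle and the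
  vertices that reach the centre shows that some cycle vertex is false for \<open>m\<close> consecutive
  steps, which kills the whole cycle.\<close>

section \<open>Walks and distances\<close>

lemma relpow_converse_iff:
  fixes P :: "('a \<times> 'a) set"
  shows "(x, y) \<in> (P\<inverse>) ^^ k \<longleftrightarrow> (y, x) \<in> P ^^ k"
proof (induction k arbitrary: y)
  case 0
  then show ?case by auto
next
  case (Suc k)
  show ?case
  proof
    assume "(x, y) \<in> (P\<inverse>) ^^ Suc k"
    then obtain z where "(x, z) \<in> (P\<inverse>) ^^ k" and "(z, y) \<in> P\<inverse>"
      by (rule relpow_Suc_E)
    then have "(y, z) \<in> P" and "(z, x) \<in> P ^^ k"
      using Suc.IH by auto
    then show "(y, x) \<in> P ^^ Suc k"
      by (rule relpow_Suc_I2)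
  next
    assume "(y, x) \<in> P ^^ Suc k"
    then obtain z where "(y, z) \<in> P" and "(z, x) \<in> P ^^ k"
      by (rule relpow_Suc_E2)
    then show "(x, y) \<in> (P\<inverse>) ^^ Suc k"
      using Suc.IH by auto
  qed
qed

definition dist_from :: "('a \<times> 'a) set \<Rightarrow> 'a set \<Rightarrow> 'a \<Rightarrow> nat" where
  "dist_from P R x = (LEAST k. \<exists>r\<in>R. (r, x) \<in> P ^^ k)"

abbreviation dist_to :: "('a \<times> 'a) set \<Rightarrow> 'a \<Rightarrow> 'a \<Rightarrow> nat" where
  "dist_to P h \<equiv> dist_from (P\<inverse>) {h}"

lemma dist_from_relpow:
  assumes "x \<in> P\<^sup>* `` R"
  shows "\<exists>r\<in>R. (r, x) \<in> P ^^ dist_from P R x"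
proof -
  have "\<exists>k. \<exists>r\<in>R. (r, x) \<in> P ^^ k"
    using assms unfolding Image_iff rtrancl_power by blast
  then show ?thesis
    unfolding dist_from_def by (rule LeastI_ex)
qed

lemma dist_from_le: "r \<in> R \<Longrightarrow> (r, x) \<in> P ^^ k \<Longrightarrow> dist_from P R x \<le> k"
  unfolding dist_from_def by (rule Least_le) blast

lemma dist_to_relpow: "(x, h) \<in> P\<^sup>* \<Longrightarrow> (x, h) \<in> P ^^ dist_to P h x"
  using dist_from_relpow[of x "P\<inverse>" "{h}"] by (simp add: rtrancl_converse relpow_converse_iff)

lemma dist_to_le: "(x, h) \<in> P ^^ k \<Longrightarrow> dist_to P h x \<le> k"
  by (rule dist_from_le[of h]) (simp_all add: relpow_converse_iff)

lemma dist_from_layer: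
  assumes x: "x \<in> P\<^sup>* `` R" and l: "l \<le> dist_from P R x"
  shows "\<exists>y\<in>P\<^sup>* `` R. dist_from P R y = l"
proof -
  let ?d = "dist_from P R x"
  obtain r where r: "r \<in> R" and "(r, x) \<in> P ^^ (l + (?d - l))"
    using dist_from_relpow[OF x] l by auto
  then obtain y where ry: "(r, y) \<in> P ^^ l" and yx: "(y, x) \<in> P ^^ (?d - l)"
    by (auto simp: relpow_add)
  have y: "y \<in> P\<^sup>* `` R"
    using r ry unfolding Image_iff rtrancl_power by blast
  have "dist_from P R y = l"
  proof (rule antisym)
    show "dist_from P R y \<le> l"
      using r ry by (rule dist_from_le)
    obtain r' where r': "r' \<in> R" and "(r', y) \<in> P ^^ dist_from P R y"
      using dist_from_relpow[OF y] by blast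
    with yx have "(r', x) \<in> P ^^ (dist_from P R y + (?d - l))"
      by (auto simp: relpow_add)
    then have "?d \<le> dist_from P R y + (?d - l)"
      by (rule dist_from_le[OF r'])
    with l show "l \<le> dist_from P R y"
      by linarith
  qed
  with y show ?thesis by blast
qed

lemma card_add_dist_from_le:
  fixes P :: "('a::finite \<times> 'a) set"
  assumes x: "x \<in> P\<^sup>* `` R" and D: "D \<inter> P\<^sup>* `` R = {}"
  shows "card D + card R + dist_from P R x \<le> card (UNIV :: 'a set)"
proof -
  let ?d = "dist_from P R x"
  let ?Y = "P\<^sup>* `` R - R"
  have "{1..?d} \<subseteq> dist_from P R ` ?Y"
  proof
    fix l assume l: "l \<in> {1..?d}"
    then obtain y where y: "y \<in> P\<^sup>* `` R" "dist_from P R y = l"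
      using dist_from_layer[OF x, of l] by auto
    have "y \<notin> R"
    proof
      assume "y \<in> R"
      then have "dist_from P R y \<le> 0"
        by (rule dist_from_le) simp
      with y(2) l show False by simp
    qed
    with y show "l \<in> dist_from P R ` ?Y" by blast
  qed
  then have "card {1..?d} \<le> card (dist_from P R ` ?Y)"
    by (rule card_mono[rotated]) simp
  also have "\<dots> \<le> card ?Y"
    by (rule card_image_le) simp
  finally have d: "?d \<le> card ?Y" by simp
  have "card (R \<union> ?Y) = card R + card ?Y"
    by (rule card_Un_disjoint) auto
  moreover have "R \<union> ?Y = P\<^sup>* `` R" by auto
  ultimately have "card (P\<^sup>* `` R) = card R + card ?Y" by simp
  moreover have "card (D \<union> P\<^sup>* `` R) = card D + card (P\<^sup>* `` R)"
    using D by (simp add: card_Un_disjoint)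
  moreover have "card (D \<union> P\<^sup>* `` R) \<le> card (UNIV :: 'a set)"
    by (rule card_mono) simp_all
  ultimately show ?thesis
    using d by linarith
qed

lemma card_add_dist_to_less:
  fixes P :: "('a::finite \<times> 'a) set"
  assumes "(x, h) \<in> P\<^sup>*" and "\<And>y. y \<in> D \<Longrightarrow> (y, h) \<notin> P\<^sup>*"
  shows "card D + dist_to P h x < card (UNIV :: 'a set)"
proof -
  have reach: "(P\<inverse>)\<^sup>* `` {h} = {y. (y, h) \<in> P\<^sup>*}"
    by (auto simp: rtrancl_converse)
  with assms have "x \<in> (P\<inverse>)\<^sup>* `` {h}" and "D \<inter> (P\<inverse>)\<^sup>* `` {h} = {}"
    by auto
  from card_add_dist_from_le[OF this] show ?thesis
    by simp
qed

lemma relpow_Diff_arc_cases: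
  "(x, y) \<in> E ^^ k \<Longrightarrow> (x, y) \<in> (E - {(a, b)}) ^^ k \<or>
     (\<exists>k1 k2. k1 + 1 + k2 = k \<and> (x, a) \<in> E ^^ k1 \<and> (b, y) \<in> E ^^ k2)"
proof (induction k arbitrary: y)
  case 0
  then show ?case by simp
next
  case (Suc k)
  obtain z where xz: "(x, z) \<in> E ^^ k" and zy: "(z, y) \<in> E"
    using Suc.prems by (rule relpow_Suc_E)
  from Suc.IH[OF xz] show ?case
  proof
    assume avoid: "(x, z) \<in> (E - {(a, b)}) ^^ k"
    show ?case
    proof (cases "(z, y) = (a, b)")
      case True
      have "(x, a) \<in> E ^^ k"
        using avoid True relpowp_mono[to_set, of "E - {(a, b)}" E] by blast
      with True show ?thesis by force
    next
      case False
      with avoid zy show ?thesis by auto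
    qed
  next
    assume "\<exists>k1 k2. k1 + 1 + k2 = k \<and> (x, a) \<in> E ^^ k1 \<and> (b, z) \<in> E ^^ k2"
    then obtain k1 k2 where "k1 + 1 + k2 = k" "(x, a) \<in> E ^^ k1" "(b, z) \<in> E ^^ k2"
      by blast
    with zy have "k1 + 1 + Suc k2 = Suc k \<and> (x, a) \<in> E ^^ k1 \<and> (b, y) \<in> E ^^ Suc k2"
      by auto
    then show ?case by blast
  qed
qed

text \<open>A shortest walk to \<open>h\<close> through the arc \<open>(a, b)\<close> would make \<open>b\<close> strictly closer to \<open>h\<close>.\<close>

lemma rtrancl_Diff_arc_if_dist_to_le:
  assumes "(w, h) \<in> G\<^sup>*" and "dist_to G h w \<le> dist_to G h b"
  shows "(w, h) \<in> (G - {(a, b)})\<^sup>*"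
  using relpow_Diff_arc_cases[OF dist_to_relpow[OF assms(1)], of a b]
proof
  assume "(w, h) \<in> (G - {(a, b)}) ^^ dist_to G h w"
  then show ?thesis
    by (auto simp: rtrancl_power)
next
  assume "\<exists>k1 k2. k1 + 1 + k2 = dist_to G h w \<and> (w, a) \<in> G ^^ k1 \<and> (b, h) \<in> G ^^ k2"
  then obtain k1 k2 where "k1 + 1 + k2 = dist_to G h w" and "(b, h) \<in> G ^^ k2"
    by blast
  with assms(2) dist_to_le[OF \<open>(b, h) \<in> G ^^ k2\<close>] show ?thesis
    by linarith
qed

lemma rtrancl_last_arc_into:
  assumes "(r, b) \<in> G\<^sup>*" and "r \<noteq> b"
  obtains p where "(r, p) \<in> (G - UNIV \<times> {b})\<^sup>*" and "(p, b) \<in> G" and "p \<noteq> b"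
proof -
  let ?S = "G - UNIV \<times> {b}"
  have "(r, y) \<in> ?S\<^sup>* \<or> (\<exists>p. (r, p) \<in> ?S\<^sup>* \<and> (p, b) \<in> G)" if "(r, y) \<in> G\<^sup>*" for y
    using that
  proof (induction rule: rtrancl_induct)
    case base
    then show ?case by simp
  next
    case (step y z)
    then show ?case
      by (cases "z = b") (auto intro: rtrancl_into_rtrancl)
  qed
  moreover have no_walk_into_b: "(r, b) \<notin> ?S\<^sup>*"
  proof
    assume "(r, b) \<in> ?S\<^sup>*"
    then show False
      using \<open>r \<noteq> b\<close> by (cases rule: rtranclE) auto
  qed
  ultimately obtain p where p: "(r, p) \<in> ?S\<^sup>*" "(p, b) \<in> G"
    using assms(1) by blast
  with no_walk_into_b have "p \<noteq> b" by blast
  with p that show ?thesis by blast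
qed

lemma obtain_other_in_neighbour:
  fixes G :: "('n::finite \<times> 'n) set"
  assumes n: "2 \<le> card (UNIV :: 'n set)" and SC: "strongly_connected G"
  obtains p where "(p, r) \<in> G" and "p \<noteq> r"
proof -
  have "UNIV \<noteq> {r}"
  proof
    assume "UNIV = {r}"
    then have "card (UNIV :: 'n set) = card {r}"
      by (rule arg_cong)
    with n show False by simp
  qed
  then obtain y where "y \<noteq> r"
    by blast
  from SC have "(y, r) \<in> G\<^sup>*"
    unfolding strongly_connected_def by blast
  then obtain p where "(y, p) \<in> (G - UNIV \<times> {r})\<^sup>*" and "(p, r) \<in> G" and "p \<noteq> r"
    using \<open>y \<noteq> r\<close> by (rule rtrancl_last_arc_into)
  with that show ?thesis
    by blast
qed

section \<open>Chains of wires\<close>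

definition wire :: "('n \<times> 'n) set \<Rightarrow> 'n set \<Rightarrow> 'n \<Rightarrow> bool" where
  "wire G R x \<longleftrightarrow> x \<notin> R \<and> (\<exists>!j. (j, x) \<in> G)"

definition parent :: "('n \<times> 'n) set \<Rightarrow> 'n \<Rightarrow> 'n" where
  "parent G x = (THE j. (j, x) \<in> G)"

lemma wire_parent:
  assumes "wire G R x"
  shows "(parent G x, x) \<in> G" and "(j, x) \<in> G \<Longrightarrow> j = parent G x"
  using assms unfolding wire_def parent_def by (metis (mono_tags, lifting) theI)+

lemma dist_from_parent_less:
  assumes "x \<in> G\<^sup>* `` R" and "wire G R x"
  shows "dist_from G R (parent G x) < dist_from G R x"
proof -
  obtain r where r: "r \<in> R" and walk: "(r, x) \<in> G ^^ dist_from G R x"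
    using dist_from_relpow[OF assms(1)] by blast
  have "dist_from G R x \<noteq> 0"
  proof
    assume "dist_from G R x = 0"
    with walk have "r = x" by simp
    with r \<open>wire G R x\<close> show False
      unfolding wire_def by simp
  qed
  then obtain k where k: "dist_from G R x = Suc k"
    using not0_implies_Suc by blast
  with walk have "(r, x) \<in> G ^^ Suc k"
    by simp
  then obtain y where ry: "(r, y) \<in> G ^^ k" and "(y, x) \<in> G"
    by (rule relpow_Suc_E)
  from wire_parent(2)[OF assms(2) this(2)] have "y = parent G x" .
  with r ry have "dist_from G R (parent G x) \<le> k"
    by (simp add: dist_from_le)
  with k show ?thesis by simp
qed

lemma dist_from_wire_chain:
  assumes "G\<^sup>* `` R = UNIV"
  shows "(\<forall>j<i. wire G R ((parent G ^^ j) a)) \<Longrightarrow>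
    dist_from G R ((parent G ^^ i) a) + i \<le> dist_from G R a"
proof (induction i)
  case 0
  then show ?case by simp
next
  case (Suc i)
  then have "dist_from G R ((parent G ^^ i) a) + i \<le> dist_from G R a"
    by simp
  moreover have "dist_from G R (parent G ((parent G ^^ i) a)) < dist_from G R ((parent G ^^ i) a)"
    by (rule dist_from_parent_less) (use assms Suc.prems in simp_all)
  ultimately show ?case by simp
qed

lemma wire_chain_ends:
  assumes "G\<^sup>* `` R = UNIV"
  obtains k where "\<not> wire G R ((parent G ^^ k) a)" and "\<forall>j<k. wire G R ((parent G ^^ j) a)"
proof -
  have "\<exists>k. \<not> wire G R ((parent G ^^ k) a)"
  proof (rule ccontr)
    assume "\<nexists>k. \<not> wire G R ((parent G ^^ k) a)"
    then have "dist_from G R ((parent G ^^ Suc (dist_from G R a)) a) + Suc (dist_from G R a)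
        \<le> dist_from G R a"
      using dist_from_wire_chain[OF assms] by blast
    then show False by simp
  qed
  then have "\<not> wire G R ((parent G ^^ (LEAST k. \<not> wire G R ((parent G ^^ k) a))) a)"
    by (rule LeastI_ex)
  moreover have "\<forall>j<(LEAST k. \<not> wire G R ((parent G ^^ k) a)). wire G R ((parent G ^^ j) a)"
    using not_less_Least by blast
  ultimately show ?thesis
    by (rule that)
qed

lemma card_wire_chain:
  assumes "G\<^sup>* `` R = UNIV" and wires: "\<forall>j<k. wire G R ((parent G ^^ j) a)"
  shows "card ((\<lambda>j. (parent G ^^ j) a) ` {..<k}) = k"
proof -
  have shift: "(parent G ^^ l) ((parent G ^^ i) a) = (parent G ^^ (l + i)) a" for l i
    by (simp add: funpow_add)
  have "i = j" if "i \<le> j" "j < k" "(parent G ^^ i) a = (parent G ^^ j) a" for i j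
  proof -
    let ?c = "(parent G ^^ i) a"
    have "\<forall>l<j - i. wire G R ((parent G ^^ l) ?c)"
      using wires that(2) by (simp add: shift)
    then have "dist_from G R ((parent G ^^ (j - i)) ?c) + (j - i) \<le> dist_from G R ?c"
      by (rule dist_from_wire_chain[OF assms(1)])
    moreover have "(parent G ^^ (j - i)) ?c = (parent G ^^ j) a"
      using \<open>i \<le> j\<close> by (simp add: shift)
    ultimately show "i = j"
      using that by simp
  qed
  then have "inj_on (\<lambda>j. (parent G ^^ j) a) {..<k}"
    by (intro inj_onI) (metis lessThan_iff nat_le_linear)
  then show ?thesis
    by (simp add: card_image)
qed

lemma card_wire_chain_Un:
  fixes G :: "('n::finite \<times> 'n) set"
  assumes "G\<^sup>* `` R = UNIV" and wires: "\<forall>j<k. wire G R ((parent G ^^ j) a)"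
  shows "card ((\<lambda>j. (parent G ^^ j) a) ` {..<k} \<union> R) = k + card R"
proof -
  have "(\<lambda>j. (parent G ^^ j) a) ` {..<k} \<inter> R = {}"
    using wires unfolding wire_def by auto
  then show ?thesis
    by (simp add: card_Un_disjoint card_wire_chain[OF assms])
qed

section \<open>Conjunctive networks\<close>

text \<open>\<open>s j i\<close> is the sign of the arc \<open>(j, i)\<close>: the literal contributed by \<open>j\<close> to \<open>f\<^sub>i\<close> is
  \<open>x\<^sub>j\<close> if the arc is positive and \<open>\<not> x\<^sub>j\<close> otherwise.\<close>

definition and_net :: "('n \<times> 'n) set \<Rightarrow> ('n \<Rightarrow> 'n \<Rightarrow> bool) \<Rightarrow> ('n \<Rightarrow> bool) \<Rightarrow> ('n \<Rightarrow> bool)" where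
  "and_net G s x i \<longleftrightarrow> (\<forall>j. (j, i) \<in> G \<longrightarrow> x j = s j i)"

definition pos_arcs :: "('n \<times> 'n) set \<Rightarrow> ('n \<Rightarrow> 'n \<Rightarrow> bool) \<Rightarrow> ('n \<times> 'n) set" where
  "pos_arcs G s = {(j, i). (j, i) \<in> G \<and> s j i}"

definition orbit :: "('n \<times> 'n) set \<Rightarrow> ('n \<Rightarrow> 'n \<Rightarrow> bool) \<Rightarrow> ('n \<Rightarrow> bool) \<Rightarrow> nat \<Rightarrow> 'n \<Rightarrow> bool" where
  "orbit G s x t = (and_net G s ^^ t) x"

lemma admits_and_net: "admits G (and_net G s)"
proof -
  have "depends_on (and_net G s) i j \<longleftrightarrow> (j, i) \<in> G" for i j
  proof
    assume "depends_on (and_net G s) i j"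
    then obtain x where "and_net G s x i \<noteq> and_net G s (x(j := \<not> x j)) i"
      unfolding depends_on_def by blast
    then show "(j, i) \<in> G"
      unfolding and_net_def by (metis fun_upd_other)
  next
    assume "(j, i) \<in> G"
    then have "and_net G s (\<lambda>k. s k i) i \<and> \<not> and_net G s ((\<lambda>k. s k i)(j := \<not> s j i)) i"
      unfolding and_net_def by auto
    then show "depends_on (and_net G s) i j"
      unfolding depends_on_def by blast
  qed
  then show ?thesis
    unfolding admits_def interaction_graph_def by auto
qed

lemma nilpotent_and_net_if_orbits_false:
  assumes "\<And>x i. \<not> orbit G s x K i"
  shows "nilpotent_class_le (and_net G s) K"
proof -
  have "(and_net G s ^^ K) x = (\<lambda>_. False)" for x
    using assms unfolding orbit_def by auto
  then show ?thesis
    unfolding nilpotent_class_le_def by blast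
qed

lemma orbit_Suc_eq: "orbit G s x (Suc t) = and_net G s (orbit G s x t)"
  by (simp add: orbit_def)

lemma orbit_Suc:
  "orbit G s x (Suc t) i \<longleftrightarrow> (\<forall>j. (j, i) \<in> G \<longrightarrow> orbit G s x t j = s j i)"
  by (simp add: orbit_Suc_eq and_net_def)

lemma orbit_false_along_pos_path:
  "(y, z) \<in> pos_arcs G s ^^ k \<Longrightarrow> \<not> orbit G s x t y \<Longrightarrow> \<not> orbit G s x (t + k) z"
proof (induction k arbitrary: z)
  case 0
  then show ?case by simp
next
  case (Suc k)
  obtain w where "(y, w) \<in> pos_arcs G s ^^ k" and "(w, z) \<in> pos_arcs G s"
    using Suc.prems(1) by (rule relpow_Suc_E)
  then have "\<not> orbit G s x (t + k) w" and "(w, z) \<in> G" and "s w z"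
    using Suc by (auto simp: pos_arcs_def)
  then show ?case
    unfolding add_Suc_right orbit_Suc by blast
qed

lemma orbit_true_along_pos_path:
  "(y, z) \<in> pos_arcs G s ^^ k \<Longrightarrow> orbit G s x (t + k) z \<Longrightarrow> orbit G s x t y"
  using orbit_false_along_pos_path by metis

lemma orbit_false_along_wire_chain:
  assumes "\<forall>t\<le>T. \<not> orbit G s x t a"
  shows "\<forall>j<i. wire G R ((parent G ^^ j) a) \<and> s (parent G ((parent G ^^ j) a)) ((parent G ^^ j) a)
    \<Longrightarrow> t + i \<le> T \<Longrightarrow> \<not> orbit G s x t ((parent G ^^ i) a)"
proof (induction i arbitrary: t)
  case 0
  with assms show ?case by simp
next
  case (Suc i)
  let ?c = "(parent G ^^ i) a"
  have "\<not> orbit G s x (Suc t) ?c"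
    using Suc.IH[of "Suc t"] Suc.prems by simp
  then obtain j where j: "(j, ?c) \<in> G" and "orbit G s x t j \<noteq> s j ?c"
    unfolding orbit_Suc by blast
  moreover have w: "wire G R ?c" and "s (parent G ?c) ?c"
    using Suc.prems(1) by simp_all
  moreover have "j = parent G ?c"
    using wire_parent(2)[OF w j] .
  ultimately show ?case
    by simp
qed

lemma orbit_false_spreads:
  fixes G :: "('n::finite \<times> 'n) set"
  assumes reach: "(pos_arcs G s)\<^sup>* `` R = UNIV"
    and silent: "\<forall>t\<ge>T. \<forall>r\<in>R. \<not> orbit G s x t r"
    and t: "T + (card (UNIV :: 'n set) - card R) \<le> t"
  shows "\<not> orbit G s x t i"
proof -
  let ?d = "dist_from (pos_arcs G s) R i"
  have i: "i \<in> (pos_arcs G s)\<^sup>* `` R"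
    using reach by simp
  from dist_from_relpow[OF i] obtain r where r: "r \<in> R" and walk: "(r, i) \<in> pos_arcs G s ^^ ?d"
    by blast
  have "card R + ?d \<le> card (UNIV :: 'n set)"
    using card_add_dist_from_le[OF i, of "{}"] by simp
  with t have "T \<le> t - ?d" and "t - ?d + ?d = t"
    by linarith+
  from \<open>T \<le> t - ?d\<close> silent r have "\<not> orbit G s x (t - ?d) r"
    by blast
  from orbit_false_along_pos_path[OF walk this] \<open>t - ?d + ?d = t\<close> show ?thesis
    by simp
qed

lemma pos_arcs_reach_all:
  assumes "strongly_connected G" and "r \<in> R"
    and neg: "\<And>j i. (j, i) \<in> G \<Longrightarrow> \<not> s j i \<Longrightarrow> i \<in> (pos_arcs G s)\<^sup>* `` R"
  shows "(pos_arcs G s)\<^sup>* `` R = UNIV"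
proof -
  have "i \<in> (pos_arcs G s)\<^sup>* `` R" if "(r, i) \<in> G\<^sup>*" for i
    using that
  proof (induction rule: rtrancl_induct)
    case base
    with \<open>r \<in> R\<close> show ?case by blast
  next
    case (step j i)
    show ?case
    proof (cases "s j i")
      case True
      with step have "(j, i) \<in> pos_arcs G s" and "j \<in> (pos_arcs G s)\<^sup>* `` R"
        by (simp_all add: pos_arcs_def)
      then show ?thesis
        by (auto intro: rtrancl_into_rtrancl)
    next
      case False
      with neg step(2) show ?thesis by blast
    qed
  qed
  with assms(1) show ?thesis
    unfolding strongly_connected_def by blast
qed

definition pos_cycle :: "('n \<times> 'n) set \<Rightarrow> ('n \<Rightarrow> 'n \<Rightarrow> bool) \<Rightarrow> (nat \<Rightarrow> 'n) \<Rightarrow> nat \<Rightarrow> bool" where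
  "pos_cycle G s c m \<longleftrightarrow> (\<forall>i<m. (c i, c (Suc i mod m)) \<in> pos_arcs G s)"

lemma cycle_relpow:
  assumes cyc: "\<forall>i<m. (c i, c (Suc i mod m)) \<in> E" and u: "u < m"
  shows "(c u, c ((u + l) mod m)) \<in> E ^^ l"
proof (induction l)
  case 0
  with u show ?case by simp
next
  case (Suc l)
  have "(c ((u + l) mod m), c (Suc ((u + l) mod m) mod m)) \<in> E"
    using cyc u by simp
  moreover have "Suc ((u + l) mod m) mod m = (u + Suc l) mod m"
    by (simp add: mod_Suc_eq)
  ultimately show ?case
    using Suc.IH by (auto intro: relpow_Suc_I)
qed

lemma mod_add_diff_eq_self:
  fixes u i m :: nat
  assumes "u < m" and "i < m"
  shows "(u + (i + m - u) mod m) mod m = i"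
proof -
  have "(u + (i + m - u) mod m) mod m = (u + (i + m - u)) mod m"
    by (rule mod_add_right_eq)
  also have "u + (i + m - u) = i + m"
    using \<open>u < m\<close> by simp
  finally show ?thesis
    using \<open>i < m\<close> by simp
qed

lemma cycle_rtrancl:
  assumes "\<forall>i<m. (c i, c (Suc i mod m)) \<in> E" and "u < m" and "i < m"
  shows "(c u, c i) \<in> E\<^sup>*"
  using cycle_relpow[OF assms(1,2), of "(i + m - u) mod m"] mod_add_diff_eq_self[OF assms(2,3)]
  by (simp add: relpow_imp_rtrancl)

lemma pos_cycle_false_Suc:
  assumes cyc: "pos_cycle G s c m" and "\<forall>i<m. \<not> orbit G s x t (c i)"
  shows "\<forall>i<m. \<not> orbit G s x (Suc t) (c i)"
proof (intro allI impI)
  fix i assume i: "i < m"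
  let ?j = "(i + m - 1) mod m"
  have "(c ?j, c ((?j + 1) mod m)) \<in> pos_arcs G s ^^ 1"
    using cyc i unfolding pos_cycle_def by (intro cycle_relpow) simp_all
  moreover have "(?j + 1) mod m = (i + m - 1 + 1) mod m"
    by (rule mod_add_left_eq)
  moreover have "i + m - 1 + 1 = i + m"
    using i by simp
  ultimately have "(c ?j, c i) \<in> pos_arcs G s ^^ 1"
    using i by simp
  moreover have "\<not> orbit G s x t (c ?j)"
    using assms(2) i by simp
  ultimately show "\<not> orbit G s x (Suc t) (c i)"
    using orbit_false_along_pos_path by fastforce
qed

lemma pos_cycle_false_mono:
  assumes "pos_cycle G s c m" and "\<forall>i<m. \<not> orbit G s x t (c i)" and "t \<le> t'"
  shows "\<forall>i<m. \<not> orbit G s x t' (c i)"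
  using assms(3,2) by (induction t' rule: dec_induct) (simp_all add: pos_cycle_false_Suc[OF assms(1)])

lemma pos_cycle_alive_before:
  assumes "pos_cycle G s c m" and "i < m" and "orbit G s x T (c i)" and "t \<le> T"
  shows "\<exists>j<m. orbit G s x t (c j)"
  using pos_cycle_false_mono[OF assms(1) _ assms(4)] assms(2,3) by blast

text \<open>The value \<open>False\<close> of a vertex travels once around the cycle in fewer than \<open>m\<close> steps.\<close>

lemma pos_cycle_silenced:
  assumes cyc: "pos_cycle G s c m" and u: "u < m" and silent: "\<forall>t<m. \<not> orbit G s x t (c u)"
    and "m \<le> Suc t"
  shows "\<forall>i<m. \<not> orbit G s x t (c i)"
proof -
  have "\<not> orbit G s x (m - 1) (c i)" if i: "i < m" for i
  proof -
    let ?l = "(i + m - u) mod m"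
    have l: "?l < m"
      using u by simp
    have "(c u, c ((u + ?l) mod m)) \<in> pos_arcs G s ^^ ?l"
      using cyc u unfolding pos_cycle_def by (rule cycle_relpow)
    then have "(c u, c i) \<in> pos_arcs G s ^^ ?l"
      using mod_add_diff_eq_self[OF u i] by simp
    moreover have "\<not> orbit G s x (m - 1 - ?l) (c u)"
      using silent l by simp
    ultimately have "\<not> orbit G s x (m - 1 - ?l + ?l) (c i)"
      by (rule orbit_false_along_pos_path)
    with l show ?thesis by simp
  qed
  then show ?thesis
    using pos_cycle_false_mono[OF cyc, of x "m - 1" t] \<open>m \<le> Suc t\<close> by simp
qed

lemma nilpotent_if_pos_cycle_dies:
  fixes G :: "('n::finite \<times> 'n) set"
  assumes cyc: "pos_cycle G s c m" and inj: "inj_on c {0..<m}"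
    and reach: "(pos_arcs G s)\<^sup>* `` (c ` {0..<m}) = UNIV"
    and dies: "\<And>x i. i < m \<Longrightarrow> \<not> orbit G s x T (c i)"
  shows "nilpotent_class_le (and_net G s) (T + (card (UNIV :: 'n set) - m))"
proof (rule nilpotent_and_net_if_orbits_false)
  fix x i
  have silent: "\<forall>t\<ge>T. \<forall>r\<in>c ` {0..<m}. \<not> orbit G s x t r"
  proof (intro allI impI ballI)
    fix t r assume "T \<le> t" and "r \<in> c ` {0..<m}"
    then obtain j where "j < m" and "r = c j"
      by auto
    moreover have "\<forall>j<m. \<not> orbit G s x T (c j)"
      using dies by blast
    ultimately show "\<not> orbit G s x t r"
      using pos_cycle_false_mono[OF cyc _ \<open>T \<le> t\<close>] by blast
  qed
  have "card (c ` {0..<m}) = m"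
    using inj by (simp add: card_image)
  then show "\<not> orbit G s x (T + (card (UNIV :: 'n set) - m)) i"
    using orbit_false_spreads[OF reach silent] by simp
qed

section \<open>A single negative arc\<close>

definition negate_arc :: "'n \<Rightarrow> 'n \<Rightarrow> 'n \<Rightarrow> 'n \<Rightarrow> bool" where
  "negate_arc a b j i \<longleftrightarrow> (j, i) \<noteq> (a, b)"

lemma pos_arcs_negate_arc: "pos_arcs G (negate_arc a b) = G - {(a, b)}"
  by (auto simp: pos_arcs_def negate_arc_def)

text \<open>While the hub \<open>h\<close> stays true, so does \<open>b\<close>, which forces the tail \<open>a\<close> of the negative
  arc to be false; this value then propagates backwards up the chain of wires above \<open>a\<close>.\<close>

lemma chain_false_before_alive_hub:
  assumes hub: "\<forall>t\<le>T. orbit G (negate_arc a b) x t h"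
    and ab: "(a, b) \<in> G" and b: "\<not> wire G R b" and bh: "(b, h) \<in> (G - {(a, b)}) ^^ k"
    and wires: "\<forall>j<i. wire G R ((parent G ^^ j) a)"
    and t: "t + i + k + 1 \<le> T"
  shows "\<not> orbit G (negate_arc a b) x t ((parent G ^^ i) a)"
proof -
  let ?s = "negate_arc a b"
  have tail: "\<forall>t'\<le>T - k - 1. \<not> orbit G ?s x t' a"
  proof (intro allI impI)
    fix t' assume "t' \<le> T - k - 1"
    with hub t have alive: "orbit G ?s x (Suc t' + k) h"
      by simp
    have "(b, h) \<in> pos_arcs G ?s ^^ k"
      using bh by (simp add: pos_arcs_negate_arc)
    from orbit_true_along_pos_path[OF this alive] have "orbit G ?s x (Suc t') b" .
    with ab have "orbit G ?s x t' a = ?s a b"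
      unfolding orbit_Suc by blast
    then show "\<not> orbit G ?s x t' a"
      by (simp add: negate_arc_def)
  qed
  have "\<forall>j<i. wire G R ((parent G ^^ j) a) \<and>
      ?s (parent G ((parent G ^^ j) a)) ((parent G ^^ j) a)"
  proof (intro allI impI conjI)
    fix j assume "j < i"
    with wires show w: "wire G R ((parent G ^^ j) a)"
      by blast
    with b have "(parent G ^^ j) a \<noteq> b"
      by blast
    then show "?s (parent G ((parent G ^^ j) a)) ((parent G ^^ j) a)"
      by (simp add: negate_arc_def)
  qed
  moreover from t have "t + i \<le> T - k - 1"
    by linarith
  ultimately show ?thesis
    by (rule orbit_false_along_wire_chain[OF tail])
qed

text \<open>If the chain reached \<open>h\<close>, its first vertex doing so would be false at time \<open>0\<close> by the
  previous lemma (the chain before it avoids the vertices reaching \<open>h\<close>, which bounds its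
  length), yet true at time \<open>0\<close> because the hub is alive.\<close>

lemma chain_not_reaching_alive_hub:
  fixes G :: "('n::finite \<times> 'n) set"
  assumes reach: "G\<^sup>* `` R = UNIV" and ab: "(a, b) \<in> G" and b: "\<not> wire G R b"
    and bh: "(b, h) \<in> (G - {(a, b)})\<^sup>*"
    and hub: "\<forall>t\<le>card (UNIV :: 'n set). orbit G (negate_arc a b) x t h"
    and wires: "\<forall>j<i. wire G R ((parent G ^^ j) a)"
  shows "((parent G ^^ i) a, h) \<notin> (G - {(a, b)})\<^sup>*"
proof
  let ?P = "G - {(a, b)}"
  let ?N = "card (UNIV :: 'n set)"
  let ?ch = "\<lambda>j. (parent G ^^ j) a"
  assume "(?ch i, h) \<in> ?P\<^sup>*"
  define i0 where "i0 = (LEAST j. (?ch j, h) \<in> ?P\<^sup>*)"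
  have i0: "(?ch i0, h) \<in> ?P\<^sup>*"
    unfolding i0_def by (rule LeastI) fact
  have "i0 \<le> i"
    unfolding i0_def by (rule Least_le) fact
  with wires have wires0: "\<forall>j<i0. wire G R (?ch j)"
    by simp
  have "(?ch j, h) \<notin> ?P\<^sup>*" if "j < i0" for j
    using not_less_Least[OF that[unfolded i0_def]] .
  then have "card (?ch ` {..<i0}) + dist_to ?P h b < ?N"
    by (intro card_add_dist_to_less[OF bh]) auto
  then have "0 + i0 + dist_to ?P h b + 1 \<le> ?N"
    using card_wire_chain[OF reach wires0] by simp
  then have "\<not> orbit G (negate_arc a b) x 0 (?ch i0)"
    by (rule chain_false_before_alive_hub[OF hub ab b dist_to_relpow[OF bh] wires0])
  moreover have "orbit G (negate_arc a b) x 0 (?ch i0)"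
  proof -
    let ?d = "dist_to ?P h (?ch i0)"
    have "?d < ?N"
      using card_add_dist_to_less[OF i0, of "{}"] by simp
    with hub have "orbit G (negate_arc a b) x (0 + ?d) h"
      by simp
    moreover have "(?ch i0, h) \<in> pos_arcs G (negate_arc a b) ^^ ?d"
      using dist_to_relpow[OF i0] by (simp add: pos_arcs_negate_arc)
    ultimately show ?thesis
      by (rule orbit_true_along_pos_path[rotated])
  qed
  ultimately show False by simp
qed

lemma alive_hub_silences_root:
  fixes G :: "('n::finite \<times> 'n) set"
  assumes reach: "G\<^sup>* `` R = UNIV" and ab: "(a, b) \<in> G" and b: "\<not> wire G R b"
    and bh: "(b, h) \<in> (G - {(a, b)})\<^sup>*"
    and non_wires: "\<And>w. w \<notin> R \<Longrightarrow> \<not> wire G R w \<Longrightarrow> (w, h) \<in> (G - {(a, b)})\<^sup>*"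
    and R_strong: "\<And>r r'. r \<in> R \<Longrightarrow> r' \<in> R \<Longrightarrow> (r, r') \<in> (G - {(a, b)})\<^sup>*"
    and hub: "\<forall>t\<le>card (UNIV :: 'n set). orbit G (negate_arc a b) x t h"
  obtains r where "r \<in> R" and "(r, h) \<notin> (G - {(a, b)})\<^sup>*"
    and "\<forall>t<card R. \<not> orbit G (negate_arc a b) x t r"
proof -
  let ?P = "G - {(a, b)}"
  let ?ch = "\<lambda>j. (parent G ^^ j) a"
  obtain k where last: "\<not> wire G R (?ch k)" and wires: "\<forall>j<k. wire G R (?ch j)"
    using reach by (rule wire_chain_ends)
  have chain_not_reaching: "(?ch j, h) \<notin> ?P\<^sup>*" if "j \<le> k" for j
    using chain_not_reaching_alive_hub[OF reach ab b bh hub, of j] wires that by simp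
  with last non_wires have root: "?ch k \<in> R"
    by blast
  have R_not_reaching: "(r, h) \<notin> ?P\<^sup>*" if "r \<in> R" for r
  proof
    assume "(r, h) \<in> ?P\<^sup>*"
    with R_strong[OF root that] have "(?ch k, h) \<in> ?P\<^sup>*"
      by (rule rtrancl_trans)
    with chain_not_reaching[of k] show False
      by simp
  qed
  have "card (?ch ` {..<k} \<union> R) + dist_to ?P h b < card (UNIV :: 'n set)"
    by (intro card_add_dist_to_less[OF bh]) (auto simp: R_not_reaching chain_not_reaching)
  moreover have "card (?ch ` {..<k} \<union> R) = k + card R"
    by (rule card_wire_chain_Un[OF reach wires])
  ultimately have "\<forall>t<card R. \<not> orbit G (negate_arc a b) x t (?ch k)"
    using chain_false_before_alive_hub[OF hub ab b dist_to_relpow[OF bh] wires] by simp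
  with root R_not_reaching show ?thesis
    using that by blast
qed

lemma obtain_avoidable_in_arc:
  assumes rb: "(r, b) \<in> G\<^sup>*" and "r \<noteq> b" and "b \<notin> R" and "\<not> wire G R b"
  obtains a where "(a, b) \<in> G" and "(r, b) \<in> (G - {(a, b)})\<^sup>*"
proof -
  obtain p where rp: "(r, p) \<in> (G - UNIV \<times> {b})\<^sup>*" and pb: "(p, b) \<in> G"
    using rb \<open>r \<noteq> b\<close> by (rule rtrancl_last_arc_into)
  have "\<exists>a. (a, b) \<in> G \<and> a \<noteq> p"
  proof (rule ccontr)
    assume none: "\<nexists>a. (a, b) \<in> G \<and> a \<noteq> p"
    have "\<exists>!j. (j, b) \<in> G"
    proof (rule ex1I)
      show "(p, b) \<in> G"
        by (fact pb)
      show "j = p" if "(j, b) \<in> G" for j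
        using that none by blast
    qed
    with \<open>b \<notin> R\<close> \<open>\<not> wire G R b\<close> show False
      unfolding wire_def by simp
  qed
  then obtain a where a: "(a, b) \<in> G" "a \<noteq> p"
    by blast
  have "G - UNIV \<times> {b} \<subseteq> G - {(a, b)}"
    by blast
  with rp have "(r, p) \<in> (G - {(a, b)})\<^sup>*"
    by (rule rtrancl_mono[THEN subsetD, rotated])
  moreover have "(p, b) \<in> G - {(a, b)}"
    using pb a(2) by blast
  ultimately have "(r, b) \<in> (G - {(a, b)})\<^sup>*"
    by (rule rtrancl_into_rtrancl)
  with a(1) show ?thesis
    by (rule that)
qed

definition cut_candidates :: "('n \<times> 'n) set \<Rightarrow> 'n set \<Rightarrow> ('n \<times> 'n) set \<Rightarrow> 'n set" where
  "cut_candidates G R W = {x. x \<notin> R \<and> \<not> wire G R x} \<union> {x \<in> R. \<exists>a. (a, x) \<in> G - W}"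

lemma not_wire_if_cut_candidate: "b \<in> cut_candidates G R W \<Longrightarrow> \<not> wire G R b"
  unfolding cut_candidates_def wire_def by blast

lemma obtain_in_arc_of_cut_candidate:
  assumes SC: "strongly_connected G" and "R \<noteq> {}" and W: "snd ` W \<subseteq> R"
    and b: "b \<in> cut_candidates G R W"
  obtains a where "(a, b) \<in> G - W" and "b \<in> (G - {(a, b)})\<^sup>* `` R"
proof (cases "b \<in> R")
  case True
  with b obtain a where "(a, b) \<in> G - W"
    unfolding cut_candidates_def by blast
  moreover have "b \<in> (G - {(a, b)})\<^sup>* `` R"
    using rtrancl_refl True by (rule ImageI)
  ultimately show ?thesis
    by (rule that)
next
  case False
  obtain r where r: "r \<in> R"
    using \<open>R \<noteq> {}\<close> by blast
  with False have "r \<noteq> b"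
    by blast
  from SC have "(r, b) \<in> G\<^sup>*"
    unfolding strongly_connected_def by blast
  then obtain a where a: "(a, b) \<in> G" and rb: "(r, b) \<in> (G - {(a, b)})\<^sup>*"
    using \<open>r \<noteq> b\<close> False not_wire_if_cut_candidate[OF b] by (rule obtain_avoidable_in_arc)
  have "b \<in> snd ` W" if "(a, b) \<in> W"
    using that by (rule image_eqI[rotated]) simp
  with W False a have "(a, b) \<in> G - W"
    by blast
  moreover from rb r have "b \<in> (G - {(a, b)})\<^sup>* `` R"
    by (rule ImageI)
  ultimately show ?thesis
    by (rule that)
qed

text \<open>The arc is cut into a candidate farthest from \<open>h\<close>, so that no shortest walk from a
  candidate to \<open>h\<close> uses it.\<close>

lemma obtain_cut_arc:
  fixes G :: "('n::finite \<times> 'n) set"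
  assumes SC: "strongly_connected G" and "R \<noteq> {}" and W: "snd ` W \<subseteq> R"
    and "cut_candidates G R W \<noteq> {}"
  obtains a b where "(a, b) \<in> G - W" and "\<not> wire G R b" and "b \<in> (G - {(a, b)})\<^sup>* `` R"
    and "(b, h) \<in> (G - {(a, b)})\<^sup>*"
    and "\<And>w. w \<in> cut_candidates G R W \<Longrightarrow> (w, h) \<in> (G - {(a, b)})\<^sup>*"
proof -
  let ?S = "cut_candidates G R W"
  let ?M = "Max (dist_to G h ` ?S)"
  have "?M \<in> dist_to G h ` ?S"
    using \<open>?S \<noteq> {}\<close> by (intro Max_in) simp_all
  then obtain b where bM: "?M = dist_to G h b" and b: "b \<in> ?S"
    by (rule imageE)
  obtain a where ab: "(a, b) \<in> G - W" and rb: "b \<in> (G - {(a, b)})\<^sup>* `` R"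
    using SC \<open>R \<noteq> {}\<close> W b by (rule obtain_in_arc_of_cut_candidate)
  have "(w, h) \<in> (G - {(a, b)})\<^sup>*" if "w \<in> ?S" for w
  proof (rule rtrancl_Diff_arc_if_dist_to_le)
    show "(w, h) \<in> G\<^sup>*"
      using SC unfolding strongly_connected_def by blast
    show "dist_to G h w \<le> dist_to G h b"
      unfolding bM[symmetric] using that by (intro Max_ge) simp_all
  qed
  with b have "(b, h) \<in> (G - {(a, b)})\<^sup>*"
    by blast
  with ab not_wire_if_cut_candidate[OF b] rb show ?thesis
    by (rule that) fact
qed

section \<open>Loops and wheels\<close>

lemma loop_nilpotent:
  fixes G :: "('n::finite \<times> 'n) set"
  assumes n: "2 \<le> card (UNIV :: 'n set)" and SC: "strongly_connected G" and loop: "(r, r) \<in> G"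
  shows "\<exists>f. admits G f \<and> nilpotent_class_le f (2 * card (UNIV :: 'n set) - 1)"
proof -
  let ?N = "card (UNIV :: 'n set)"
  obtain p where "(p, r) \<in> G" and "p \<noteq> r"
    using n SC by (rule obtain_other_in_neighbour)
  then have "r \<in> cut_candidates G {r} {(r, r)}"
    unfolding cut_candidates_def by blast
  then have candidates_ne: "cut_candidates G {r} {(r, r)} \<noteq> {}"
    by blast
  obtain a b where ab: "(a, b) \<in> G - {(r, r)}" and b: "\<not> wire G {r} b"
    and rb: "b \<in> (G - {(a, b)})\<^sup>* `` {r}" and br: "(b, r) \<in> (G - {(a, b)})\<^sup>*"
    and candidates: "\<And>w. w \<in> cut_candidates G {r} {(r, r)} \<Longrightarrow> (w, r) \<in> (G - {(a, b)})\<^sup>*"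
    by (rule obtain_cut_arc[OF SC, of "{r}" "{(r, r)}"]) (use candidates_ne in auto)
  let ?s = "negate_arc a b"
  have cyc: "pos_cycle G ?s (\<lambda>_. r) 1"
    using loop ab by (auto simp: pos_cycle_def pos_arcs_negate_arc)
  have reach: "G\<^sup>* `` {r} = UNIV"
    using SC unfolding strongly_connected_def by blast
  have reach_pos: "(pos_arcs G ?s)\<^sup>* `` {r} = UNIV"
    by (rule pos_arcs_reach_all[OF SC]) (use rb in \<open>auto simp: negate_arc_def pos_arcs_negate_arc\<close>)
  have dies: "\<not> orbit G ?s x ?N r" for x
  proof
    assume "orbit G ?s x ?N r"
    with pos_cycle_alive_before[OF cyc, of 0 x ?N] have hub: "\<forall>t\<le>?N. orbit G ?s x t r"
      by simp
    have non_wires: "(w, r) \<in> (G - {(a, b)})\<^sup>*" if "w \<notin> {r}" and "\<not> wire G {r} w" for w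
      using that by (intro candidates) (simp add: cut_candidates_def)
    obtain r' where "r' \<in> {r}" and "(r', r) \<notin> (G - {(a, b)})\<^sup>*"
      by (rule alive_hub_silences_root[OF reach _ b br non_wires _ hub]) (use ab in auto)
    then show False by simp
  qed
  have "nilpotent_class_le (and_net G ?s) (?N + (?N - 1))"
    using nilpotent_if_pos_cycle_dies[OF cyc _ _ dies] reach_pos by simp
  moreover have "?N + (?N - 1) = 2 * ?N - 1"
    using n by simp
  ultimately show ?thesis
    using admits_and_net by metis
qed

lemma wired_wheel_cycle_dies:
  fixes G :: "('n::finite \<times> 'n) set" and c :: "nat \<Rightarrow> 'n" and m :: nat and v :: 'n
  defines "C \<equiv> c ` {0..<m}"
  defines "s \<equiv> \<lambda>j i. \<not> (j = v \<and> i \<in> C)"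
  assumes reach: "G\<^sup>* `` C = UNIV" and inj: "inj_on c {0..<m}"
    and center: "\<forall>i<m. (v, c i) \<in> G" and wired: "\<And>x. x \<notin> C \<Longrightarrow> wire G C x"
    and cyc: "pos_cycle G s c m" and i: "i < m"
  shows "\<not> orbit G s x (Suc (card (UNIV :: 'n set))) (c i)"
proof
  let ?N = "card (UNIV :: 'n set)"
  let ?ch = "\<lambda>j. (parent G ^^ j) v"
  assume alive: "orbit G s x (Suc ?N) (c i)"
  have v_false: "\<forall>t\<le>?N. \<not> orbit G s x t v"
  proof (intro allI impI)
    fix t assume "t \<le> ?N"
    then obtain j where j: "j < m" and "orbit G s x (Suc t) (c j)"
      using pos_cycle_alive_before[OF cyc i alive, of "Suc t"] by auto
    moreover from j center have "(v, c j) \<in> G" and "\<not> s v (c j)"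
      by (auto simp: s_def C_def)
    ultimately show "\<not> orbit G s x t v"
      unfolding orbit_Suc by blast
  qed
  obtain k where last: "\<not> wire G C (?ch k)" and wires: "\<forall>j<k. wire G C (?ch j)"
    using reach by (rule wire_chain_ends)
  from last wired have "?ch k \<in> C"
    by blast
  then obtain u where u: "u < m" and ch_k: "?ch k = c u"
    unfolding C_def by auto
  have pos_chain: "\<forall>j<k. wire G C (?ch j) \<and> s (parent G (?ch j)) (?ch j)"
  proof (intro allI impI conjI)
    fix j assume "j < k"
    with wires show w: "wire G C (?ch j)"
      by blast
    then show "s (parent G (?ch j)) (?ch j)"
      unfolding s_def wire_def by blast
  qed
  have "card (?ch ` {..<k} \<union> C) = k + m"
    using card_wire_chain_Un[OF reach wires] inj by (simp add: card_image C_def)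
  moreover have "card (?ch ` {..<k} \<union> C) \<le> ?N"
    by (rule card_mono) simp_all
  ultimately have km: "k + m \<le> ?N"
    by simp
  have "\<forall>t<m. \<not> orbit G s x t (c u)"
    using orbit_false_along_wire_chain[OF v_false pos_chain] km ch_k by simp
  with cyc u km have "\<forall>i<m. \<not> orbit G s x (Suc ?N) (c i)"
    by (intro pos_cycle_silenced) simp_all
  with alive i show False
    by blast
qed

lemma cut_wheel_cycle_dies:
  fixes G :: "('n::finite \<times> 'n) set" and c :: "nat \<Rightarrow> 'n" and m :: nat
  defines "C \<equiv> c ` {0..<m}"
  assumes reach: "G\<^sup>* `` C = UNIV" and inj: "inj_on c {0..<m}"
    and center: "\<forall>i<m. (v, c i) \<in> G - {(a, b)}"
    and cyc: "pos_cycle G (negate_arc a b) c m"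
    and ab: "(a, b) \<in> G" and b: "\<not> wire G C b" and bv: "(b, v) \<in> (G - {(a, b)})\<^sup>*"
    and non_wires: "\<And>w. w \<notin> C \<Longrightarrow> \<not> wire G C w \<Longrightarrow> (w, v) \<in> (G - {(a, b)})\<^sup>*"
    and i: "i < m"
  shows "\<not> orbit G (negate_arc a b) x (Suc (card (UNIV :: 'n set))) (c i)"
proof
  let ?s = "negate_arc a b"
  let ?N = "card (UNIV :: 'n set)"
  assume alive: "orbit G ?s x (Suc ?N) (c i)"
  have hub: "\<forall>t\<le>?N. orbit G ?s x t v"
  proof (intro allI impI)
    fix t assume "t \<le> ?N"
    then obtain j where j: "j < m" and "orbit G ?s x (Suc t) (c j)"
      using pos_cycle_alive_before[OF cyc i alive, of "Suc t"] by auto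
    moreover from j center have "(v, c j) \<in> G" and "?s v (c j)"
      by (auto simp: negate_arc_def)
    ultimately show "orbit G ?s x t v"
      unfolding orbit_Suc by blast
  qed
  have cycle_arcs: "\<forall>j<m. (c j, c (Suc j mod m)) \<in> G - {(a, b)}"
    using cyc by (simp add: pos_cycle_def pos_arcs_negate_arc)
  have C_strong: "(r, r') \<in> (G - {(a, b)})\<^sup>*" if "r \<in> C" and "r' \<in> C" for r r'
  proof -
    from that obtain u u' where "u < m" "r = c u" "u' < m" "r' = c u'"
      unfolding C_def by auto
    with cycle_rtrancl[OF cycle_arcs] show ?thesis
      by simp
  qed
  obtain r where "r \<in> C" and silent: "\<forall>t<card C. \<not> orbit G ?s x t r"
    by (rule alive_hub_silences_root[OF reach ab b bv non_wires C_strong hub]) blast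
  then obtain u where u: "u < m" and "r = c u"
    unfolding C_def by auto
  have card_C: "card C = m"
    using inj unfolding C_def by (simp add: card_image)
  moreover have "card C \<le> ?N"
    by (rule card_mono) simp_all
  ultimately have "\<forall>i<m. \<not> orbit G ?s x (Suc ?N) (c i)"
    using pos_cycle_silenced[OF cyc u] silent \<open>r = c u\<close> by simp
  with alive i show False
    by blast
qed

lemma wired_wheel_sign:
  fixes G :: "('n::finite \<times> 'n) set" and c :: "nat \<Rightarrow> 'n"
  assumes SC: "strongly_connected G" and m: "1 \<le> m" and inj: "inj_on c {0..<m}"
    and v: "v \<notin> c ` {0..<m}" and arcs: "\<forall>i<m. (c i, c (Suc i mod m)) \<in> G \<and> (v, c i) \<in> G"
    and wired: "\<And>x. x \<notin> c ` {0..<m} \<Longrightarrow> wire G (c ` {0..<m}) x"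
  obtains s where "pos_cycle G s c m" and "(pos_arcs G s)\<^sup>* `` (c ` {0..<m}) = UNIV"
    and "\<And>x i. i < m \<Longrightarrow> \<not> orbit G s x (Suc (card (UNIV :: 'n set))) (c i)"
proof -
  let ?C = "c ` {0..<m}"
  let ?s = "\<lambda>j i. \<not> (j = v \<and> i \<in> ?C)"
  have "c 0 \<in> ?C"
    using m by simp
  with SC have reach: "G\<^sup>* `` ?C = UNIV"
    unfolding strongly_connected_def by blast
  have cyc: "pos_cycle G ?s c m"
    using arcs v by (auto simp: pos_cycle_def pos_arcs_def)
  moreover have "(pos_arcs G ?s)\<^sup>* `` ?C = UNIV"
  proof (rule pos_arcs_reach_all[OF SC \<open>c 0 \<in> ?C\<close>])
    fix j i assume "\<not> ?s j i"
    then have "i \<in> ?C" by simp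
    with rtrancl_refl show "i \<in> (pos_arcs G ?s)\<^sup>* `` ?C"
      by (rule ImageI)
  qed
  moreover have "\<not> orbit G ?s x (Suc (card (UNIV :: 'n set))) (c i)" if "i < m" for x i
  proof (rule wired_wheel_cycle_dies[OF reach inj _ wired cyc that])
    show "\<forall>i<m. (v, c i) \<in> G"
      using arcs by blast
  qed
  ultimately show ?thesis
    by (rule that)
qed

lemma cut_wheel_sign:
  fixes G :: "('n::finite \<times> 'n) set" and c :: "nat \<Rightarrow> 'n"
  assumes SC: "strongly_connected G" and m: "1 \<le> m" and inj: "inj_on c {0..<m}"
    and arcs: "\<forall>i<m. (c i, c (Suc i mod m)) \<in> G \<and> (v, c i) \<in> G"
    and unwired: "y \<notin> c ` {0..<m}" "\<not> wire G (c ` {0..<m}) y"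
  obtains s where "pos_cycle G s c m" and "(pos_arcs G s)\<^sup>* `` (c ` {0..<m}) = UNIV"
    and "\<And>x i. i < m \<Longrightarrow> \<not> orbit G s x (Suc (card (UNIV :: 'n set))) (c i)"
proof -
  let ?C = "c ` {0..<m}"
  let ?W = "{(c i, c (Suc i mod m)) | i. i < m} \<union> {(v, c i) | i. i < m}"
  have "c 0 \<in> ?C"
    using m by simp
  with SC have reach: "G\<^sup>* `` ?C = UNIV"
    unfolding strongly_connected_def by blast
  have candidates_ne: "cut_candidates G ?C ?W \<noteq> {}"
    using unwired unfolding cut_candidates_def by blast
  have W_heads: "snd ` ?W \<subseteq> ?C"
    by auto
  have C_ne: "?C \<noteq> {}"
    using \<open>c 0 \<in> ?C\<close> by blast
  obtain a b where ab: "(a, b) \<in> G - ?W" and b: "\<not> wire G ?C b"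
    and rb: "b \<in> (G - {(a, b)})\<^sup>* `` ?C" and bv: "(b, v) \<in> (G - {(a, b)})\<^sup>*"
    and candidates: "\<And>w. w \<in> cut_candidates G ?C ?W \<Longrightarrow> (w, v) \<in> (G - {(a, b)})\<^sup>*"
    by (rule obtain_cut_arc[OF SC C_ne W_heads candidates_ne, where h = v]) (rule that)
  let ?s = "negate_arc a b"
  have cyc: "pos_cycle G ?s c m"
    using arcs ab by (auto simp: pos_cycle_def pos_arcs_negate_arc)
  moreover have "(pos_arcs G ?s)\<^sup>* `` ?C = UNIV"
    by (rule pos_arcs_reach_all[OF SC \<open>c 0 \<in> ?C\<close>])
      (use rb in \<open>auto simp: negate_arc_def pos_arcs_negate_arc\<close>)
  moreover have "\<not> orbit G ?s x (Suc (card (UNIV :: 'n set))) (c i)" if "i < m" for x i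
  proof (rule cut_wheel_cycle_dies[OF reach inj _ cyc _ b bv _ that])
    show "\<forall>i<m. (v, c i) \<in> G - {(a, b)}"
      using arcs ab by blast
    show "(a, b) \<in> G"
      using ab by blast
    show "(w, v) \<in> (G - {(a, b)})\<^sup>*" if "w \<notin> ?C" and "\<not> wire G ?C w" for w
      using that by (intro candidates) (simp add: cut_candidates_def)
  qed
  ultimately show ?thesis
    by (rule that)
qed

lemma wheel_nilpotent:
  fixes G :: "('n::finite \<times> 'n) set" and c :: "nat \<Rightarrow> 'n"
  assumes SC: "strongly_connected G" and m: "1 \<le> m" and inj: "inj_on c {0..<m}"
    and v: "v \<notin> c ` {0..<m}" and arcs: "\<forall>i<m. (c i, c (Suc i mod m)) \<in> G \<and> (v, c i) \<in> G"
  shows "\<exists>f. admits G f \<and> nilpotent_class_le f (2 * card (UNIV :: 'n set) + 1 - m)"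
proof -
  let ?N = "card (UNIV :: 'n set)"
  obtain s where cyc: "pos_cycle G s c m" and reach_pos: "(pos_arcs G s)\<^sup>* `` (c ` {0..<m}) = UNIV"
    and dies: "\<And>x i. i < m \<Longrightarrow> \<not> orbit G s x (Suc ?N) (c i)"
  proof (cases "\<forall>x. x \<notin> c ` {0..<m} \<longrightarrow> wire G (c ` {0..<m}) x")
    case True
    then show ?thesis
      using wired_wheel_sign[OF SC m inj v arcs] that by blast
  next
    case False
    then obtain y where "y \<notin> c ` {0..<m}" and "\<not> wire G (c ` {0..<m}) y"
      by blast
    then show ?thesis
      using cut_wheel_sign[OF SC m inj arcs] that by blast
  qed
  have "card (insert v (c ` {0..<m})) \<le> ?N"
    by (rule card_mono) simp_all
  with v inj have "Suc ?N + (?N - m) = 2 * ?N + 1 - m"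
    by (simp add: card_image)
  moreover have "nilpotent_class_le (and_net G s) (Suc ?N + (?N - m))"
    by (rule nilpotent_if_pos_cycle_dies[OF cyc inj reach_pos dies])
  ultimately show ?thesis
    using admits_and_net by metis
qed

theorem theorem4:
  fixes G :: "('n::finite \<times> 'n) set"
  assumes "card (UNIV :: 'n set) \<ge> 2" and "strongly_connected G"
  shows "(\<forall>m\<ge>1. contains_wheel G m \<longrightarrow>
            (\<exists>f. admits G f \<and> nilpotent_class_le f (2 * card (UNIV :: 'n set) + 1 - m)))
       \<and> ((\<exists>v. (v, v) \<in> G) \<longrightarrow>
            (\<exists>f. admits G f \<and> nilpotent_class_le f (2 * card (UNIV :: 'n set) - 1)))"
proof (intro conjI allI impI)
  fix m :: nat
  assume "1 \<le> m" and "contains_wheel G m"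
  then obtain v c where "inj_on c {0..<m}" and "v \<notin> c ` {0..<m}"
    and "\<forall>i<m. (c i, c (Suc i mod m)) \<in> G \<and> (v, c i) \<in> G"
    unfolding contains_wheel_def by blast
  with assms(2) \<open>1 \<le> m\<close> show "\<exists>f. admits G f \<and> nilpotent_class_le f (2 * card (UNIV :: 'n set) + 1 - m)"
    by (rule wheel_nilpotent)
next
  assume "\<exists>v. (v, v) \<in> G"
  with loop_nilpotent[OF assms] show "\<exists>f. admits G f \<and> nilpotent_class_le f (2 * card (UNIV :: 'n set) - 1)"
    by blast
qed

end
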